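(* For $\theta,\rho\in\mathbb{R}$ let $a_0=\tfrac14(1-\cos2\theta-\sin2\theta-\cos2\rho-\sin2\rho+\cos(2\theta-2\rho)+\sin(2\theta-2\rho))$, $a_1=\tfrac14(1+\cos2\theta-\sin2\theta+\cos2\rho-\sin2\rho+\cos(2\theta-2\rho)-\sin(2\theta-2\rho))$, $a_2=\tfrac12(1-\cos(2\theta-2\rho)-\sin(2\theta-2\rho))$, $a_3=\tfrac12(1-\cos(2\theta-2\rho)+\sin(2\theta-2\rho))$, $a_4=\tfrac14(1+\cos2\theta+\sin2\theta+\cos2\rho+\sin2\rho+\cos(2\theta-2\rho)+\sin(2\theta-2\rho))$, $a_5=\tfrac14(1-\cos2\theta+\sin2\theta-\cos2\rho+\sin2\rho+\cos(2\theta-2\rho)-\sin(2\theta-2\rho))$, and $m_0^{(\theta,\rho)}(z)=\frac{1}{\sqrt2}\sum_{k=0}^5a_kz^k$. Then: (a) $m_0^{(\theta,\rho)}(z)$ is divisible by $(1+z)^2$ if and only if $\cos2\theta+\cos2\rho=\tfrac12$. (b) $m_0^{(\theta,\rho)}(z)$ is divisible by $(1+z)^3$ if and only if $\cos2\theta+\cos2\rho=\tfrac12$ and $\sin2\theta+\sin2\rho=2\sin(2\theta-2\rho)$; equivalently, if and only if $(\theta,\rho)$ equals $(\theta_0,\rho_0)$ with $\theta_0=\cos^{-1}\sqrt[4]{5/32}$ and $\rho_0=\cos^{-1}\sqrt{5/4-\sqrt{5/32}}$, or is obtained from this pair by $(\theta,\rho)\mapsto(\theta+m\pi,\rho+n\pi)$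 with $m,n\in\mathbb{Z}$, or by $(\theta,\rho)\mapsto(-\theta,-\rho)$, or by both.
   Context: These $a_k$ are the filter coefficients of the genus-3, scale-2 loop $A(z)=V(Q_\theta^\perp+zQ_\theta)(Q_\rho^\perp+zQ_\rho)$, where $Q_\theta$ is the projection onto $(\cos\theta,\sin\theta)^{T}$ and $V$ is proportional to $\begin{pmatrix}1&1\\1&-1\end{pmatrix}$; divisibility is in the polynomial ring $\mathbb{C}[z]$. *)

theory Defs
  imports "HOL-Analysis.Analysis" "HOL-Computational_Algebra.Polynomial"
begin

definition filt_coeffs :: "real \<Rightarrow> real \<Rightarrow> real list" where
  "filt_coeffs \<theta> \<rho> =
    [ (1 - cos (2*\<theta>) - sin (2*\<theta>) - cos (2*\<rho>) - sin (2*\<rho>)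
         + cos (2*\<theta> - 2*\<rho>) + sin (2*\<theta> - 2*\<rho>)) / 4,
      (1 + cos (2*\<theta>) - sin (2*\<theta>) + cos (2*\<rho>) - sin (2*\<rho>)
         + cos (2*\<theta> - 2*\<rho>) - sin (2*\<theta> - 2*\<rho>)) / 4,
      (1 - cos (2*\<theta> - 2*\<rho>) - sin (2*\<theta> - 2*\<rho>)) / 2,
      (1 - cos (2*\<theta> - 2*\<rho>) + sin (2*\<theta> - 2*\<rho>)) / 2,
      (1 + cos (2*\<theta>) + sin (2*\<theta>) + cos (2*\<rho>) + sin (2*\<rho>)
         + cos (2*\<theta> - 2*\<rho>) + sin (2*\<theta> - 2*\<rho>)) / 4,
      (1 - cos (2*\<theta>) + sin (2*\<theta>) - cos (2*\<rho>) + sin (2*\<rho>)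
         + cos (2*\<theta> - 2*\<rho>) - sin (2*\<theta> - 2*\<rho>)) / 4 ]"

definition m0 :: "real \<Rightarrow> real \<Rightarrow> complex poly" where
  "m0 \<theta> \<rho> = smult (complex_of_real (1 / sqrt 2))
      (Poly (map complex_of_real (filt_coeffs \<theta> \<rho>)))"

definition theta0 :: real where "theta0 = arccos (root 4 (5/32))"
definition rho0 :: real where "rho0 = arccos (sqrt (5/4 - sqrt (5/32)))"

end

theory Submission
  imports Defs
begin

text \<open>
  The factor (1 + z)^k divides m0 exactly when m0 and its first k - 1 derivatives vanish at -1.
  Here m0(-1) = 0 always, while m0'(-1) and m0''(-1) are explicit trigonometric expressions,
  which gives (a) and the first form of (b).
  With a = cos 2\<theta>, b = sin 2\<theta>, c = cos 2\<rho>, d = sin 2\<rho> the conditions read a + c = 1/2 and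
  d (1 + 2a) = -2ab. Squaring the latter and using the circle relations leaves (a + 1)^2 = 5/8,
  which pins down cos 2\<theta> and cos 2\<rho> to their values at (theta0, rho0); the unsquared equation
  then says that sin 2\<theta> and sin 2\<rho> have the same sign, which forces the same choice of sign for
  \<theta> and \<rho>.
\<close>

lemma linear_power_Suc_dvd_iff_pderiv:
  fixes p :: "'a::{idom,semiring_char_0} poly"
  shows "[:-a, 1:] ^ Suc n dvd p \<longleftrightarrow> poly p a = 0 \<and> [:-a, 1:] ^ n dvd pderiv p"
proof -
  consider "poly p a \<noteq> 0" | "p = 0" | "p \<noteq> 0" "poly p a = 0"
    by blast
  then show ?thesis
  proof cases
    case 1
    then have "\<not> [:-a, 1:] ^ Suc n dvd p"
      by (metis dvd_mult_left poly_eq_0_iff_dvd power_Suc)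
    with 1 show ?thesis
      by blast
  next
    case 2
    then show ?thesis
      by simp
  next
    case 3
    then have "pderiv p \<noteq> 0"
      using pderiv_iszero by force
    have "[:-a, 1:] ^ Suc n dvd p \<longleftrightarrow> Suc n \<le> order a p"
      using 3 order_divides by blast
    also have "\<dots> \<longleftrightarrow> n \<le> order a (pderiv p)"
      using 3 order_pderiv[of p a] by simp
    also have "\<dots> \<longleftrightarrow> [:-a, 1:] ^ n dvd pderiv p"
      using \<open>pderiv p \<noteq> 0\<close> order_divides by blast
    finally show ?thesis
      using 3 by simp
  qed
qed

lemma linear_power_dvd_iff_higher_pderiv:
  fixes p :: "'a::{idom,semiring_char_0} poly"
  shows "[:-a, 1:] ^ n dvd p \<longleftrightarrow> (\<forall>k<n. poly ((pderiv ^^ k) p) a = 0)"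
proof (induction n arbitrary: p)
  case 0
  then show ?case by simp
next
  case (Suc n)
  have "[:-a, 1:] ^ Suc n dvd p \<longleftrightarrow> poly p a = 0 \<and> [:-a, 1:] ^ n dvd pderiv p"
    by (rule linear_power_Suc_dvd_iff_pderiv)
  also have "\<dots> \<longleftrightarrow> poly p a = 0 \<and> (\<forall>k<n. poly ((pderiv ^^ k) (pderiv p)) a = 0)"
    by (simp only: Suc.IH)
  also have "\<dots> \<longleftrightarrow> (\<forall>k<Suc n. poly ((pderiv ^^ k) p) a = 0)"
    unfolding All_less_Suc2 funpow_Suc_right comp_apply funpow_0 ..
  finally show ?case .
qed

lemma m0_pderivs_at_minus_one:
  fixes \<theta> \<rho> :: real
  shows "poly (m0 \<theta> \<rho>) (-1) = 0"
    and "poly (pderiv (m0 \<theta> \<rho>)) (-1)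
           = of_real ((1 - 2 * (cos (2*\<theta>) + cos (2*\<rho>))) / sqrt 2)"
    and "poly (pderiv (pderiv (m0 \<theta> \<rho>))) (-1)
           = of_real (2 * (4 * (cos (2*\<theta>) + cos (2*\<rho>)) - 2
                           - (sin (2*\<theta>) + sin (2*\<rho>) - 2 * sin (2*\<theta> - 2*\<rho>))) / sqrt 2)"
  unfolding m0_def filt_coeffs_def
  by (simp_all add: pderiv_pCons pderiv_smult field_simps)

lemma m0_dvd_iff:
  fixes \<theta> \<rho> :: real
  shows "[:1, 1:] ^ 2 dvd m0 \<theta> \<rho> \<longleftrightarrow> cos (2*\<theta>) + cos (2*\<rho>) = 1/2"
    and "[:1, 1:] ^ 3 dvd m0 \<theta> \<rho> \<longleftrightarrow>
           cos (2*\<theta>) + cos (2*\<rho>) = 1/2 \<and> sin (2*\<theta>) + sin (2*\<rho>) = 2 * sin (2*\<theta> - 2*\<rho>)"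
proof -
  have dvd_iff: "[:1, 1:] ^ n dvd m0 \<theta> \<rho> \<longleftrightarrow> (\<forall>k<n. poly ((pderiv ^^ k) (m0 \<theta> \<rho>)) (-1) = 0)" for n
    using linear_power_dvd_iff_higher_pderiv[of "-1" n "m0 \<theta> \<rho>"] by simp
  show "[:1, 1:] ^ 2 dvd m0 \<theta> \<rho> \<longleftrightarrow> cos (2*\<theta>) + cos (2*\<rho>) = 1/2"
    unfolding dvd_iff numeral_2_eq_2 All_less_Suc2 funpow.simps id_apply comp_apply
      m0_pderivs_at_minus_one of_real_eq_0_iff by (simp add: mult.commute)
  show "[:1, 1:] ^ 3 dvd m0 \<theta> \<rho> \<longleftrightarrow>
          cos (2*\<theta>) + cos (2*\<rho>) = 1/2 \<and> sin (2*\<theta>) + sin (2*\<rho>) = 2 * sin (2*\<theta> - 2*\<rho>)"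
    unfolding dvd_iff numeral_3_eq_3 All_less_Suc2 funpow.simps id_apply comp_apply
      m0_pderivs_at_minus_one of_real_eq_0_iff by auto
qed

lemma sqrt_5_32_bounds: "1/4 < sqrt (5/32 :: real)" "sqrt (5/32 :: real) < 1/2"
  by (rule real_less_rsqrt, simp add: power2_eq_square)
     (rule real_less_lsqrt, simp_all add: power2_eq_square)

lemma unit_circle_system_iff:
  fixes a b c d :: real
  assumes circle_ab: "a\<^sup>2 + b\<^sup>2 = 1" and circle_cd: "c\<^sup>2 + d\<^sup>2 = 1"
  shows "a + c = 1/2 \<and> b + d = 2 * (b*c - a*d)
     \<longleftrightarrow> a = 2 * sqrt (5/32) - 1 \<and> c = 3/2 - 2 * sqrt (5/32) \<and> b * d > 0"
proof -
  define S :: real where "S = sqrt (5/32)"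
  have S: "S\<^sup>2 = 5/32" "1/4 < S" "S < 1/2"
    using sqrt_5_32_bounds unfolding S_def by simp_all
  have linear: "b + d = 2 * (b*c - a*d) \<longleftrightarrow> d * (1 + 2*a) = -2*a*b" if "c = 1/2 - a"
    unfolding that by algebra
  \<comment> \<open>the quartic terms in a cancel\<close>
  have squares: "(d * (1 + 2*a))\<^sup>2 - (-2*a*b)\<^sup>2 = 2 * ((a + 1)\<^sup>2 - (2*S)\<^sup>2)" if "c = 1/2 - a"
  proof -
    have "b\<^sup>2 = 1 - a\<^sup>2" "d\<^sup>2 = 1 - (1/2 - a)\<^sup>2"
      using circle_ab circle_cd that by simp_all
    then show ?thesis
      using S(1) by (simp add: power_mult_distrib) algebra
  qed
  show ?thesis
    unfolding S_def[symmetric]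
  proof
    assume "a + c = 1/2 \<and> b + d = 2 * (b*c - a*d)"
    then have c: "c = 1/2 - a" and eq: "d * (1 + 2*a) = -2*a*b"
      using linear by auto
    have "(a + 1)\<^sup>2 = (2*S)\<^sup>2"
      using squares[OF c] eq by simp
    moreover have "a + 1 \<ge> 0"
    proof -
      have "a\<^sup>2 \<le> 1"
        using circle_ab zero_le_power2[of b] by linarith
      then show ?thesis
        using abs_square_le_1[of a] by linarith
    qed
    ultimately have a: "a = 2*S - 1"
      using S power2_eq_iff_nonneg[of "a + 1" "2*S"] by simp
    have "b \<noteq> 0"
      using circle_ab a S abs_square_eq_1[of a] by auto
    have "b * d * (1 + 2*a) = -2*a * b\<^sup>2"
      using arg_cong[OF eq, of "(*) b"] by (simp add: power2_eq_square algebra_simps)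
    moreover have "-2*a * b\<^sup>2 > 0" "1 + 2*a > 0"
      using a S \<open>b \<noteq> 0\<close> by simp_all
    ultimately have "b * d > 0"
      by (metis zero_less_mult_pos2)
    with a c show "a = 2*S - 1 \<and> c = 3/2 - 2*S \<and> b * d > 0"
      by simp
  next
    assume asm: "a = 2*S - 1 \<and> c = 3/2 - 2*S \<and> b * d > 0"
    then have c: "c = 1/2 - a"
      by simp
    have "(d * (1 + 2*a))\<^sup>2 = (-2*a*b)\<^sup>2"
      using squares[OF c] asm by simp
    moreover have "d * (1 + 2*a) * (-2*a*b) > 0"
    proof -
      have "d * (1 + 2*a) * (-2*a*b) = (b * d) * (1 + 2*a) * (-2*a)"
        by (simp add: algebra_simps)
      also have "\<dots> > 0"
        using asm S mult_pos_pos[OF mult_pos_pos, of "b * d" "1 + 2*a" "-2*a"] by simp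
      finally show ?thesis .
    qed
    ultimately have "d * (1 + 2*a) = -2*a*b"
      by (metis power2_eq_iff mult_minus_left neg_less_0_iff_less zero_le_square not_less)
    then show "a + c = 1/2 \<and> b + d = 2 * (b*c - a*d)"
      using linear[OF c] c by simp
  qed
qed

lemma cos_sin_double_arccos:
  fixes x :: real
  assumes "0 < x" "x < 1"
  shows "cos (2 * arccos x) = 2 * x\<^sup>2 - 1" and "sin (2 * arccos x) > 0"
proof -
  show "cos (2 * arccos x) = 2 * x\<^sup>2 - 1"
    using assms by (simp add: cos_double_cos)
  have "sin (arccos x) > 0"
    using assms by (simp add: sin_arccos power_less_one_iff)
  then show "sin (2 * arccos x) > 0"
    using assms by (simp add: sin_double)
qed

lemma theta0_double_angle: "cos (2 * theta0) = 2 * sqrt (5/32) - 1" "sin (2 * theta0) > 0"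
proof -
  define r :: real where "r = root 4 (5/32)"
  have "0 < r"
    unfolding r_def by simp
  have r_square: "r\<^sup>2 = sqrt (5/32)"
    by (rule real_sqrt_unique[symmetric]) (simp_all add: r_def flip: power_mult)
  then have "r < 1"
    using \<open>0 < r\<close> sqrt_5_32_bounds power_less_one_iff[of r 2] by auto
  show "cos (2 * theta0) = 2 * sqrt (5/32) - 1" "sin (2 * theta0) > 0"
    unfolding theta0_def r_def[symmetric]
    using cos_sin_double_arccos[OF \<open>0 < r\<close> \<open>r < 1\<close>] r_square by simp_all
qed

lemma rho0_double_angle: "cos (2 * rho0) = 3/2 - 2 * sqrt (5/32)" "sin (2 * rho0) > 0"
proof -
  define q :: real where "q = sqrt (5/4 - sqrt (5/32))"
  have "q\<^sup>2 = 5/4 - sqrt (5/32)" "0 < q" "q < 1"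
    using sqrt_5_32_bounds unfolding q_def by (simp_all add: real_less_lsqrt)
  then show "cos (2 * rho0) = 3/2 - 2 * sqrt (5/32)" "sin (2 * rho0) > 0"
    unfolding rho0_def q_def[symmetric] using cos_sin_double_arccos[of q] by simp_all
qed

lemma double_angle_shift:
  fixes y :: real and m :: int
  assumes "s \<in> {1, -1}"
  shows "cos (2 * (s*y + of_int m * pi)) = cos (2*y)"
    and "sin (2 * (s*y + of_int m * pi)) = s * sin (2*y)"
proof -
  have angle: "2 * (s*y + of_int m * pi) = s * (2*y) + 2 * pi * of_int m"
    by (simp add: algebra_simps)
  show "cos (2 * (s*y + of_int m * pi)) = cos (2*y)"
    and "sin (2 * (s*y + of_int m * pi)) = s * sin (2*y)"
    unfolding angle using assms by (auto simp: cos_add sin_add)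
qed

lemma cos_double_eq_iff:
  fixes x y :: real
  shows "cos (2*x) = cos (2*y) \<longleftrightarrow> (\<exists>s \<in> {1, -1}. \<exists>m :: int. x = s*y + of_int m * pi)"
proof
  assume "cos (2*x) = cos (2*y)"
  then obtain n where "n \<in> \<int>" and "2*x = 2*y + 2*n*pi \<or> 2*x = -(2*y) + 2*n*pi"
    unfolding cos_eq by blast
  moreover from \<open>n \<in> \<int>\<close> obtain m :: int where "n = of_int m"
    by (auto elim: Ints_cases)
  ultimately have "x = 1*y + of_int m * pi \<or> x = -1*y + of_int m * pi"
    by auto
  then show "\<exists>s \<in> {1, -1}. \<exists>m :: int. x = s*y + of_int m * pi"
    by blast
next
  assume "\<exists>s \<in> {1, -1}. \<exists>m :: int. x = s*y + of_int m * pi"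
  then show "cos (2*x) = cos (2*y)"
    using double_angle_shift(1) by blast
qed

lemma double_angles_eq_iff:
  fixes \<theta> \<rho> \<alpha> \<beta> :: real
  assumes "sin (2*\<alpha>) * sin (2*\<beta>) > 0"
  shows "cos (2*\<theta>) = cos (2*\<alpha>) \<and> cos (2*\<rho>) = cos (2*\<beta>) \<and> sin (2*\<theta>) * sin (2*\<rho>) > 0
     \<longleftrightarrow> (\<exists>s \<in> {1, -1}. \<exists>m n :: int. \<theta> = s*\<alpha> + of_int m * pi \<and> \<rho> = s*\<beta> + of_int n * pi)"
proof
  assume asm: "cos (2*\<theta>) = cos (2*\<alpha>) \<and> cos (2*\<rho>) = cos (2*\<beta>) \<and> sin (2*\<theta>) * sin (2*\<rho>) > 0"
  then obtain s s' :: real and m n :: int where s: "s \<in> {1, -1}" "s' \<in> {1, -1}"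
    and \<theta>: "\<theta> = s*\<alpha> + of_int m * pi" and \<rho>: "\<rho> = s'*\<beta> + of_int n * pi"
    unfolding cos_double_eq_iff by blast
  have "sin (2*\<theta>) * sin (2*\<rho>) = (s * s') * (sin (2*\<alpha>) * sin (2*\<beta>))"
    unfolding \<theta> \<rho> double_angle_shift[OF s(1)] double_angle_shift[OF s(2)] by simp
  with asm assms have "s * s' > 0"
    by (metis zero_less_mult_pos2 mult.commute)
  with s have "s' = s"
    by auto
  with s \<theta> \<rho> show "\<exists>s \<in> {1, -1}. \<exists>m n :: int. \<theta> = s*\<alpha> + of_int m * pi \<and> \<rho> = s*\<beta> + of_int n * pi"
    by blast
next
  assume "\<exists>s \<in> {1, -1}. \<exists>m n :: int. \<theta> = s*\<alpha> + of_int m * pi \<and> \<rho> = s*\<beta> + of_int n * pi"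
  then obtain s :: real and m n :: int where s: "s \<in> {1, -1}"
    and \<theta>: "\<theta> = s*\<alpha> + of_int m * pi" and \<rho>: "\<rho> = s*\<beta> + of_int n * pi"
    by blast
  have "sin (2*\<theta>) * sin (2*\<rho>) = sin (2*\<alpha>) * sin (2*\<beta>)"
    unfolding \<theta> \<rho> double_angle_shift[OF s] using s by auto
  moreover have "cos (2*\<theta>) = cos (2*\<alpha>)" "cos (2*\<rho>) = cos (2*\<beta>)"
    unfolding \<theta> \<rho> double_angle_shift[OF s] by simp_all
  ultimately show "cos (2*\<theta>) = cos (2*\<alpha>) \<and> cos (2*\<rho>) = cos (2*\<beta>) \<and> sin (2*\<theta>) * sin (2*\<rho>) > 0"
    using assms by simp
qed

lemma double_angle_system_iff_base_angles:
  fixes \<theta> \<rho> :: real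
  shows "cos (2*\<theta>) + cos (2*\<rho>) = 1/2 \<and> sin (2*\<theta>) + sin (2*\<rho>) = 2 * sin (2*\<theta> - 2*\<rho>)
     \<longleftrightarrow> (\<exists>s \<in> {1, -1}. \<exists>m n :: int. \<theta> = s * theta0 + of_int m * pi \<and> \<rho> = s * rho0 + of_int n * pi)"
proof -
  have "cos (2*\<theta>) + cos (2*\<rho>) = 1/2 \<and> sin (2*\<theta>) + sin (2*\<rho>) = 2 * sin (2*\<theta> - 2*\<rho>)
    \<longleftrightarrow> cos (2*\<theta>) + cos (2*\<rho>) = 1/2 \<and>
        sin (2*\<theta>) + sin (2*\<rho>) = 2 * (sin (2*\<theta>) * cos (2*\<rho>) - cos (2*\<theta>) * sin (2*\<rho>))"
    by (simp add: sin_diff)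
  also have "\<dots> \<longleftrightarrow> cos (2*\<theta>) = 2 * sqrt (5/32) - 1 \<and> cos (2*\<rho>) = 3/2 - 2 * sqrt (5/32)
                   \<and> sin (2*\<theta>) * sin (2*\<rho>) > 0"
    by (rule unit_circle_system_iff) simp_all
  also have "\<dots> \<longleftrightarrow> cos (2*\<theta>) = cos (2*theta0) \<and> cos (2*\<rho>) = cos (2*rho0)
                   \<and> sin (2*\<theta>) * sin (2*\<rho>) > 0"
    by (simp only: theta0_double_angle rho0_double_angle)
  also have "\<dots> \<longleftrightarrow> (\<exists>s \<in> {1, -1}. \<exists>m n :: int. \<theta> = s * theta0 + of_int m * pi \<and> \<rho> = s * rho0 + of_int n * pi)"
    by (rule double_angles_eq_iff) (simp add: theta0_double_angle rho0_double_angle)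
  finally show ?thesis .
qed

theorem proposition8p12:
  fixes \<theta> \<rho> :: real
  shows "([:1, 1:] ^ 2 dvd m0 \<theta> \<rho> \<longleftrightarrow> cos (2*\<theta>) + cos (2*\<rho>) = 1/2)
       \<and> ([:1, 1:] ^ 3 dvd m0 \<theta> \<rho> \<longleftrightarrow>
            cos (2*\<theta>) + cos (2*\<rho>) = 1/2 \<and>
            sin (2*\<theta>) + sin (2*\<rho>) = 2 * sin (2*\<theta> - 2*\<rho>))
       \<and> ([:1, 1:] ^ 3 dvd m0 \<theta> \<rho> \<longleftrightarrow>
            (\<exists>s \<in> {1, -1::real}. \<exists>m n :: int.
                \<theta> = s * theta0 + of_int m * pi \<and> \<rho> = s * rho0 + of_int n * pi))"
  using m0_dvd_iff double_angle_system_iff_base_angles by blast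

end
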